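(* Let $p$ be a prime number and $\Gamma$ a group. If $\Gamma$ is Jordan (respectively, nilpotently Jordan of class at most $c$), then $\Gamma$ is $p$-Jordan (respectively, nilpotently $p$-Jordan of class at most $c$).
   Context: A group $\Gamma$ is Jordan if there is a constant $J(\Gamma)$ such that every finite subgroup of $\Gamma$ contains a normal abelian subgroup of index at most $J(\Gamma)$; it is nilpotently Jordan of class at most $c$ if there is $J(\Gamma)$ such that every finite subgroup contains a normal subgroup of index at most $J(\Gamma)$ that is nilpotent of class at most $c$. For a prime $p$, $\Gamma$ is $p$-Jordan (respectively, nilpotently $p$-Jordan of class at most $c$) if there exist constants $J(\Gamma)$, $e(\Gamma)$ such that every finite subgroup $G$ of $\Gamma$ contains a normal subgroup $N$ of order coprime to $p$ and index at most $J(\Gamma)\cdot|G_p|^{e(\Gamma)}$ with $N$ abelian (respectively, nilpotent of class at most $c$), where $G_p$ is a $p$-Sylow subgroup of $G$. *)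

theory Defs
  imports "HOL-Algebra.Algebra" "HOL-Computational_Algebra.Primes"
begin

definition comm_subgroup :: "('a, 'b) monoid_scheme \<Rightarrow> 'a set \<Rightarrow> 'a set \<Rightarrow> 'a set" where
  "comm_subgroup G A B =
     generate G {x \<otimes>\<^bsub>G\<^esub> y \<otimes>\<^bsub>G\<^esub> inv\<^bsub>G\<^esub> x \<otimes>\<^bsub>G\<^esub> inv\<^bsub>G\<^esub> y | x y. x \<in> A \<and> y \<in> B}"

text \<open>Lower central series of a subgroup N: index 0 is N = gamma_1,
  index (Suc i) is [gamma_(i+1), N] = gamma_(i+2).\<close>
fun lower_central :: "('a, 'b) monoid_scheme \<Rightarrow> 'a set \<Rightarrow> nat \<Rightarrow> 'a set" where
  "lower_central G N 0 = N"
| "lower_central G N (Suc i) = comm_subgroup G (lower_central G N i) N"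

definition nilpotent_class_le :: "('a, 'b) monoid_scheme \<Rightarrow> 'a set \<Rightarrow> nat \<Rightarrow> bool" where
  "nilpotent_class_le G N c \<longleftrightarrow> lower_central G N c = {\<one>\<^bsub>G\<^esub>}"

definition abelian_set :: "('a, 'b) monoid_scheme \<Rightarrow> 'a set \<Rightarrow> bool" where
  "abelian_set G N \<longleftrightarrow> (\<forall>x\<in>N. \<forall>y\<in>N. x \<otimes>\<^bsub>G\<^esub> y = y \<otimes>\<^bsub>G\<^esub> x)"

definition sylow_order :: "nat \<Rightarrow> nat \<Rightarrow> nat" where
  "sylow_order p n = p ^ multiplicity p n"

definition jordan :: "('a, 'b) monoid_scheme \<Rightarrow> bool" where
  "jordan G \<longleftrightarrow> (\<exists>J::nat. \<forall>H. subgroup H G \<and> finite H \<longrightarrow>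
      (\<exists>N. N \<lhd> G\<lparr>carrier := H\<rparr> \<and> abelian_set G N \<and> card H \<le> J * card N))"

definition nil_jordan :: "('a, 'b) monoid_scheme \<Rightarrow> nat \<Rightarrow> bool" where
  "nil_jordan G c \<longleftrightarrow> (\<exists>J::nat. \<forall>H. subgroup H G \<and> finite H \<longrightarrow>
      (\<exists>N. N \<lhd> G\<lparr>carrier := H\<rparr> \<and> nilpotent_class_le G N c \<and> card H \<le> J * card N))"

definition p_jordan :: "('a, 'b) monoid_scheme \<Rightarrow> nat \<Rightarrow> bool" where
  "p_jordan G p \<longleftrightarrow> (\<exists>(J::nat) (e::nat). \<forall>H. subgroup H G \<and> finite H \<longrightarrow>
      (\<exists>N. N \<lhd> G\<lparr>carrier := H\<rparr> \<and> coprime (card N) p \<and> abelian_set G N \<and>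
           card H \<le> J * sylow_order p (card H) ^ e * card N))"

definition nil_p_jordan :: "('a, 'b) monoid_scheme \<Rightarrow> nat \<Rightarrow> nat \<Rightarrow> bool" where
  "nil_p_jordan G p c \<longleftrightarrow> (\<exists>(J::nat) (e::nat). \<forall>H. subgroup H G \<and> finite H \<longrightarrow>
      (\<exists>N. N \<lhd> G\<lparr>carrier := H\<rparr> \<and> coprime (card N) p \<and> nilpotent_class_le G N c \<and>
           card H \<le> J * sylow_order p (card H) ^ e * card N))"

end

theory Submission
  imports Defs
begin

(* For a finite subgroup H, the Jordan property provides a normal subgroup N of bounded index
   which is nilpotent (abelian groups have class 1). Let d be the part of |N| prime to p. In a
   finite nilpotent group normalizers grow, so every Sylow subgroup is normal; multiplying the
   Sylow q-subgroups for the primes q dividing d shows that K = {x in N. x^d = 1} is a subgroup of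
   order d. Being defined by an equation, K is normal in H; its order is prime to p, and |N| / |K|
   is the order of a p-Sylow subgroup of N, hence at most |H_p|. So the Jordan constant works
   with exponent 1. *)

lemma coprime_multiplicity_power_div:
  fixes q n m :: nat
  assumes q: "Factorial_Ring.prime q" and n: "n > 0" and m: "m dvd n"
    and qa: "q ^ multiplicity q n dvd m"
  shows "coprime (q ^ multiplicity q n) (m div q ^ multiplicity q n)"
proof -
  define a where "a = multiplicity q n"
  obtain m' where m': "m = q ^ a * m'" using qa unfolding a_def by (elim dvdE)
  have "\<not> q dvd m'"
  proof
    assume "q dvd m'"
    then have "q ^ Suc a dvd n" using m m' by (metis dvd_trans mult_dvd_mono power_Suc2 dvd_refl)
    then have "Suc a \<le> a" unfolding a_def using q n by (intro multiplicity_geI) auto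
    then show False by simp
  qed
  then have "coprime q m'" using q by (simp add: prime_imp_coprime)
  then show ?thesis using q m' unfolding a_def[symmetric] by (simp add: prime_gt_0_nat)
qed

lemma hall_divisor_remove_prime:
  fixes q n d :: nat
  assumes q: "Factorial_Ring.prime q" and qd: "q dvd d" and dn: "d dvd n" and n: "n > 0"
    and hall: "coprime d (n div d)"
  obtains d' where "d = d' * q ^ multiplicity q n" "d' < d" "d' dvd n"
    "coprime d' (n div d')" "coprime d' q"
proof -
  define e where "e = n div d"
  define a where "a = multiplicity q n"
  have ne: "n = d * e" using dn unfolding e_def by simp
  have nz: "d \<noteq> 0" "e \<noteq> 0" using ne n by auto
  have "\<not> q dvd e" using hall qd q unfolding e_def[symmetric]
    by (metis coprime_common_divisor not_prime_unit)
  then have ad: "a = multiplicity q d" unfolding a_def ne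
    using q nz by (simp add: prime_elem_multiplicity_mult_distrib not_dvd_imp_multiplicity_0)
  define d' where "d' = d div q ^ a"
  have d: "d = d' * q ^ a" unfolding d'_def ad by (simp add: multiplicity_dvd)
  have "a > 0" unfolding ad using qd nz q by (simp add: prime_multiplicity_gt_zero_iff)
  then have "q ^ a > 1" using q prime_gt_1_nat one_less_power by blast
  then have "d' < d" using d nz by simp
  moreover have "d' dvd n" using d dn by (metis dvd_mult_left)
  moreover have "coprime d' q"
  proof -
    have "\<not> q dvd d'"
      using nz prime_gt_1_nat[OF q] multiplicity_decompose[of d q] unfolding d'_def ad by auto
    then show ?thesis using q prime_imp_coprime coprime_commute by blast
  qed
  moreover have "coprime d' (n div d')"
  proof -
    have "d' \<noteq> 0" using d nz by auto
    then have "n div d' = q ^ a * e" using ne d by (simp add: mult.assoc)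
    moreover have "coprime d' e" using hall d unfolding e_def[symmetric] by simp
    ultimately show ?thesis using \<open>coprime d' q\<close> by simp
  qed
  ultimately show ?thesis using that d unfolding a_def by blast
qed

definition torsion :: "('a, 'b) monoid_scheme \<Rightarrow> nat \<Rightarrow> 'a set" where
  "torsion G k = {x \<in> carrier G. x [^]\<^bsub>G\<^esub> k = \<one>\<^bsub>G\<^esub>}"

context group
begin

lemma conj_nat_pow:
  assumes "g \<in> carrier G" "x \<in> carrier G"
  shows "(g \<otimes> x \<otimes> inv g) [^] (n::nat) = g \<otimes> x [^] n \<otimes> inv g"
proof (induction n)
  case 0
  then show ?case using assms by simp
next
  case (Suc n)
  then show ?case using assms by (simp add: m_assoc) (simp add: m_assoc[symmetric])
qed

lemma normalizerI:
  assumes "H \<subseteq> carrier G" "g \<in> carrier G"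
    and "\<And>h. h \<in> H \<Longrightarrow> g \<otimes> h \<otimes> inv g \<in> H"
    and "\<And>h. h \<in> H \<Longrightarrow> inv g \<otimes> h \<otimes> g \<in> H"
  shows "g \<in> normalizer G H"
proof -
  have "g <# H #> inv g = H"
  proof
    show "g <# H #> inv g \<subseteq> H"
      using assms(3) unfolding l_coset_def r_coset_def by auto
    show "H \<subseteq> g <# H #> inv g"
    proof
      fix h assume h: "h \<in> H"
      then have "h = g \<otimes> (inv g \<otimes> h \<otimes> g) \<otimes> inv g"
        using assms(1,2) conjugation_is_surj by auto
      then show "h \<in> g <# H #> inv g"
        using assms(4)[OF h] unfolding l_coset_def r_coset_def by auto
    qed
  qed
  then show ?thesis
    using assms(1,2) unfolding normalizer_def stabilizer_def by auto
qed

lemma normalizerD: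
  assumes "H \<subseteq> carrier G" "g \<in> normalizer G H" "h \<in> H"
  shows "g \<otimes> h \<otimes> inv g \<in> H"
proof -
  have "g <# H #> inv g = H"
    using assms(1,2) unfolding normalizer_def stabilizer_def by auto
  then show ?thesis
    using assms(3) unfolding l_coset_def r_coset_def by auto
qed

lemma subgroup_subset_normalizer:
  assumes "subgroup L G"
  shows "L \<subseteq> normalizer G L"
  using subgroup.subset[OF normal_imp_subgroup[OF subgroup_in_normalizer[OF assms]]] by simp

lemma normal_in_subgroup_iff:
  assumes H: "subgroup H G"
  shows "N \<lhd> G\<lparr>carrier := H\<rparr> \<longleftrightarrow>
    subgroup N G \<and> N \<subseteq> H \<and> (\<forall>g\<in>H. \<forall>x\<in>N. g \<otimes> x \<otimes> inv g \<in> N)"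
proof -
  interpret H: group "G\<lparr>carrier := H\<rparr>" using subgroup_imp_group[OF H] .
  have "subgroup N (G\<lparr>carrier := H\<rparr>) \<longleftrightarrow> subgroup N G \<and> N \<subseteq> H"
    using H subgroup_incl incl_subgroup[OF H] subgroup.subset by fastforce
  then show ?thesis
    unfolding H.normal_inv_iff using m_inv_consistent[OF H] by auto
qed

lemma card_subgroup_dvd_card:
  assumes A: "subgroup A G" and B: "subgroup B G" "A \<subseteq> B"
  shows "card A dvd card B"
proof -
  interpret B: group "G\<lparr>carrier := B\<rparr>" using subgroup_imp_group[OF B(1)] .
  have "card (rcosets\<^bsub>G\<lparr>carrier := B\<rparr>\<^esub> A) * card A = card B"
    using B.lagrange[OF subgroup_incl[OF A B]] by (simp add: order_def)
  then show ?thesis by (metis dvd_triv_right)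
qed

lemma pow_card_subgroup_eq_one:
  assumes "subgroup H G" "x \<in> H"
  shows "x [^] card H = \<one>"
proof -
  interpret H: group "G\<lparr>carrier := H\<rparr>" using subgroup_imp_group[OF assms(1)] .
  show ?thesis
    using H.pow_order_eq_1 assms(2) by (simp add: order_def flip: nat_pow_consistent)
qed

lemma normal_set_mult:
  assumes A: "A \<lhd> G" and B: "B \<lhd> G"
  shows "A <#> B \<lhd> G"
proof (rule normal_invI)
  show "subgroup (A <#> B) G" using mult_norm_subgroup[OF A normal_imp_subgroup[OF B]] .
  fix g x assume g: "g \<in> carrier G" and "x \<in> A <#> B"
  then obtain a b where ab: "a \<in> A" "b \<in> B" "x = a \<otimes> b" unfolding set_mult_def by auto
  have c: "a \<in> carrier G" "b \<in> carrier G"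
    using ab A B normal_imp_subgroup subgroup.subset by blast+
  have "g \<otimes> x \<otimes> inv g = (g \<otimes> a \<otimes> inv g) \<otimes> (g \<otimes> b \<otimes> inv g)"
    using g c ab(3) by (simp add: m_assoc) (simp add: m_assoc[symmetric])
  moreover have "g \<otimes> a \<otimes> inv g \<in> A" "g \<otimes> b \<otimes> inv g \<in> B"
    using A B g ab normal_inv_iff by blast+
  ultimately show "g \<otimes> x \<otimes> inv g \<in> A <#> B" unfolding set_mult_def by blast
qed

lemma card_set_mult_coprime:
  assumes A: "subgroup A G" "finite A" and B: "subgroup B G" "finite B"
    and AB: "subgroup (A <#> B) G" and cop: "coprime (card A) (card B)"
  shows "card (A <#> B) = card A * card B"
proof -
  have prod: "A <#> B = (\<lambda>(a, b). a \<otimes> b) ` (A \<times> B)" unfolding set_mult_def by auto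
  then have fin: "finite (A <#> B)" using A(2) B(2) by simp
  have le: "card (A <#> B) \<le> card A * card B"
    using prod card_image_le[of "A \<times> B"] A(2) B(2) by (simp add: card_cartesian_product)
  have "A \<subseteq> A <#> B"
    using A(1) subgroup.one_closed[OF B(1)] subgroup.subset[OF A(1)]
    unfolding set_mult_def by force
  moreover have "B \<subseteq> A <#> B"
    using B(1) subgroup.one_closed[OF A(1)] subgroup.subset[OF B(1)]
    unfolding set_mult_def by force
  ultimately have "card A * card B dvd card (A <#> B)"
    using card_subgroup_dvd_card A(1) B(1) AB cop by (intro divides_mult) auto
  moreover have "card (A <#> B) > 0"
    using fin subgroup.one_closed[OF AB] card_gt_0_iff by blast
  ultimately show ?thesis using le by (simp add: dvd_imp_le le_antisym)
qed

lemma mem_normal_subgroup_if_pow_eq_one: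
  assumes fin: "finite (carrier G)" and T: "T \<lhd> G" and x: "x \<in> carrier G"
    and xk: "x [^] k = \<one>" and cop: "coprime k (order G div card T)"
  shows "x \<in> T"
proof -
  interpret T: normal T G by (rule T)
  interpret Q: group "G Mod T" by (rule T.factorgroup_is_group)
  let ?c = "T #> x"
  have c: "?c \<in> carrier (G Mod T)" using x unfolding FactGroup_def RCOSETS_def by auto
  have "?c [^]\<^bsub>G Mod T\<^esub> k = T #> \<one>" using T.FactGroup_pow x xk by simp
  then have "Q.ord ?c dvd k" using Q.pow_eq_id[OF c] T.subset by simp
  moreover have "order (G Mod T) = order G div card T"
  proof -
    have "card T > 0" using fin T.subset T.one_closed card_gt_0_iff finite_subset by blast
    then show ?thesis
      using lagrange[OF T.subgroup_axioms] unfolding order_def FactGroup_def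
      by (metis nonzero_mult_div_cancel_right neq0_conv partial_object.select_convs(1))
  qed
  then have "Q.ord ?c dvd order G div card T" using Q.ord_dvd_group_order[OF c] by simp
  ultimately have "Q.ord ?c = 1" using cop by (metis coprime_common_divisor_nat nat_dvd_1_iff_1)
  then have "?c = T" using Q.ord_eq_1[OF c] by simp
  then show ?thesis using rcos_self[OF x T.subgroup_axioms] by simp
qed

lemma torsion_normal:
  assumes "subgroup (torsion G k) G"
  shows "torsion G k \<lhd> G"
proof (rule normal_invI[OF assms])
  fix g x assume "g \<in> carrier G" "x \<in> torsion G k"
  then show "g \<otimes> x \<otimes> inv g \<in> torsion G k"
    unfolding torsion_def by (simp add: conj_nat_pow)
qed

lemma normal_hall_subgroup_conj_closed:
  assumes M: "subgroup M G" "finite M" and P: "P \<lhd> G\<lparr>carrier := M\<rparr>"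
    and hall: "coprime (card P) (card M div card P)"
    and w: "w \<in> normalizer G M" and y: "y \<in> P"
  shows "w \<otimes> y \<otimes> inv w \<in> P"
proof -
  interpret M: group "G\<lparr>carrier := M\<rparr>" using subgroup_imp_group[OF M(1)] .
  have PG: "subgroup P G" and PM: "P \<subseteq> M" using P normal_in_subgroup_iff[OF M(1)] by auto
  have wy: "w \<in> carrier G" "y \<in> carrier G"
    using w y PM subgroup.subset[OF M(1)] unfolding normalizer_def stabilizer_def by auto
  have "w \<otimes> y \<otimes> inv w \<in> M" using normalizerD[OF subgroup.subset[OF M(1)] w] y PM by blast
  moreover have "(w \<otimes> y \<otimes> inv w) [^] card P = \<one>"
    using conj_nat_pow[OF wy] pow_card_subgroup_eq_one[OF PG y] wy by simp
  ultimately show ?thesis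
    using M.mem_normal_subgroup_if_pow_eq_one[OF _ P, of "w \<otimes> y \<otimes> inv w" "card P"] M(2) hall
    by (simp add: order_def flip: nat_pow_consistent)
qed

lemma lower_central_subset:
  assumes N: "subgroup N G"
  shows "lower_central G N i \<subseteq> N"
proof (induction i)
  case 0
  then show ?case by simp
next
  case (Suc i)
  have "{x \<otimes> y \<otimes> inv x \<otimes> inv y | x y. x \<in> lower_central G N i \<and> y \<in> N} \<subseteq> N"
    using Suc N by (auto intro!: subgroup.m_closed[OF N] subgroup.m_inv_closed[OF N])
  then show ?case unfolding lower_central.simps comm_subgroup_def
    by (rule generate_subgroup_incl[OF _ N])
qed

lemma lower_central_subgroup:
  assumes N: "subgroup N G"
  shows "subgroup (lower_central G N i) G"
proof (cases i)
  case 0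
  then show ?thesis using N by simp
next
  case (Suc j)
  have "{x \<otimes> y \<otimes> inv x \<otimes> inv y | x y. x \<in> lower_central G N j \<and> y \<in> N} \<subseteq> carrier G"
    using lower_central_subset[OF N] subgroup.subset[OF N] by blast
  then show ?thesis
    unfolding Suc lower_central.simps comm_subgroup_def by (rule generate_is_subgroup)
qed

lemma lower_central_mono: "A \<subseteq> B \<Longrightarrow> lower_central G A i \<subseteq> lower_central G B i"
proof (induction i)
  case 0
  then show ?case by simp
next
  case (Suc i)
  then show ?case unfolding lower_central.simps comm_subgroup_def
    by (intro mono_generate) blast
qed

lemma lower_central_consistent:
  assumes N: "subgroup N G"
  shows "lower_central (G\<lparr>carrier := N\<rparr>) N i = lower_central G N i"
proof (induction i)
  case 0
  then show ?case by simp
next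
  case (Suc i)
  let ?S = "{x \<otimes> y \<otimes> inv x \<otimes> inv y | x y. x \<in> lower_central G N i \<and> y \<in> N}"
  have S: "?S \<subseteq> N"
    using lower_central_subset[OF N] N by (blast intro: subgroup.m_closed subgroup.m_inv_closed)
  have "{x \<otimes> y \<otimes> inv\<^bsub>G\<lparr>carrier := N\<rparr>\<^esub> x \<otimes> inv\<^bsub>G\<lparr>carrier := N\<rparr>\<^esub> y | x y.
          x \<in> lower_central G N i \<and> y \<in> N} = ?S"
    using lower_central_subset[OF N] by (force simp: m_inv_consistent[OF N])
  then show ?case
    using Suc generate_consistent[OF S N] by (simp add: comm_subgroup_def)
qed

lemma nilpotent_class_le_subgroup:
  assumes "subgroup K G" "K \<subseteq> N" "nilpotent_class_le G N c"
  shows "nilpotent_class_le G K c"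
  using lower_central_mono[OF assms(2), of c] assms(3)
    subgroup.one_closed[OF lower_central_subgroup[OF assms(1)]]
  unfolding nilpotent_class_le_def by blast

lemma abelian_set_imp_nilpotent_class_le_1:
  assumes N: "N \<subseteq> carrier G" and ab: "abelian_set G N"
  shows "nilpotent_class_le G N 1"
proof -
  have "{x \<otimes> y \<otimes> inv x \<otimes> inv y | x y. x \<in> N \<and> y \<in> N} \<subseteq> {\<one>}"
  proof clarify
    fix x y assume xy: "x \<in> N" "y \<in> N"
    then have "x \<otimes> y = y \<otimes> x" using ab unfolding abelian_set_def by blast
    then show "x \<otimes> y \<otimes> inv x \<otimes> inv y = \<one>" using xy N by (simp add: m_assoc subsetD)
  qed
  then have "comm_subgroup G N N \<subseteq> {\<one>}"
    unfolding comm_subgroup_def by (rule generate_subgroup_incl[OF _ triv_subgroup])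
  moreover have "\<one> \<in> comm_subgroup G N N" unfolding comm_subgroup_def by (rule generate.one)
  ultimately show ?thesis unfolding nilpotent_class_le_def by auto
qed

end

locale nilpotent_group = group +
  fixes c :: nat
  assumes nilpotent: "nilpotent_class_le G (carrier G) c"

lemma (in nilpotent_group) normalizer_grows:
  assumes L: "subgroup L G" and proper: "L \<noteq> carrier G"
  shows "L \<subset> normalizer G L"
proof -
  have LG: "L \<subseteq> carrier G" using subgroup.subset[OF L] .
  let ?\<gamma> = "lower_central G (carrier G)"
  (* If L were its own normalizer, every term of the lower central series would lie in L:
     an element of \<gamma>_j normalizes L as soon as [\<gamma>_j, G] = \<gamma>_(j+1) lies in L. *)
  have step: "?\<gamma> j \<subseteq> L" if IH: "?\<gamma> (Suc j) \<subseteq> L" and normL: "normalizer G L \<subseteq> L" for j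
  proof
    fix z assume z: "z \<in> ?\<gamma> j"
    have conj: "w \<otimes> l \<otimes> inv w \<in> L" if w: "w \<in> ?\<gamma> j" and l: "l \<in> L" for w l
    proof -
      have wl: "w \<in> carrier G" "l \<in> carrier G"
        using w l LG lower_central_subset[OF subgroup_self] by blast+
      have "w \<otimes> l \<otimes> inv w \<otimes> inv l \<in> ?\<gamma> (Suc j)"
        using w wl unfolding lower_central.simps comm_subgroup_def by (blast intro: generate.incl)
      moreover have "w \<otimes> l \<otimes> inv w = (w \<otimes> l \<otimes> inv w \<otimes> inv l) \<otimes> l"
        using wl by (simp add: m_assoc)
      ultimately show ?thesis using IH l subgroup.m_closed[OF L] by (metis subsetD)
    qed
    have "inv z \<in> ?\<gamma> j"
      using z subgroup.m_inv_closed[OF lower_central_subgroup[OF subgroup_self]] by blast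
    moreover have "z \<in> carrier G" using z lower_central_subset[OF subgroup_self] by blast
    ultimately have "z \<in> normalizer G L"
      using normalizerI[OF LG] conj[OF z] conj[of "inv z"] by simp
    then show "z \<in> L" using normL by blast
  qed
  have "\<not> normalizer G L \<subseteq> L"
  proof
    assume normL: "normalizer G L \<subseteq> L"
    have "?\<gamma> 0 \<subseteq> L"
    proof (rule inc_induct[of 0 c "\<lambda>j. ?\<gamma> j \<subseteq> L"])
      show "?\<gamma> c \<subseteq> L"
        using nilpotent subgroup.one_closed[OF L] unfolding nilpotent_class_le_def by simp
      show "?\<gamma> n \<subseteq> L" if "?\<gamma> (Suc n) \<subseteq> L" for n using step[OF that normL] .
    qed simp
    then show False using proper LG by simp
  qed
  then show ?thesis using subgroup_subset_normalizer[OF L] by blast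
qed

locale finite_nilpotent_group = nilpotent_group +
  assumes finite_carrier: "finite (carrier G)"
begin

lemma sylow_normal:
  assumes q: "Factorial_Ring.prime q"
  obtains P where "P \<lhd> G" "card P = q ^ multiplicity q (order G)"
proof -
  define a where "a = multiplicity q (order G)"
  have "order G = q ^ a * (order G div q ^ a)" unfolding a_def by (simp add: multiplicity_dvd)
  then obtain P where P: "subgroup P G" "card P = q ^ a"
    using sylow_thm[OF q is_group _ finite_carrier] by blast
  define M where "M = normalizer G P"
  have PG: "P \<subseteq> carrier G" using subgroup.subset[OF P(1)] .
  have M: "subgroup M G" unfolding M_def using normalizer_imp_subgroup[OF PG] .
  have PM: "P \<subseteq> M" unfolding M_def using subgroup_subset_normalizer[OF P(1)] .
  have P_normal_M: "P \<lhd> G\<lparr>carrier := M\<rparr>"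
    unfolding M_def using subgroup_in_normalizer[OF P(1)] .
  have hall: "coprime (card P) (card M div card P)"
  proof -
    have "card M dvd order G"
      using card_subgroup_dvd_card[OF M subgroup_self] subgroup.subset[OF M]
      by (simp add: order_def)
    moreover have "q ^ a dvd card M" using card_subgroup_dvd_card[OF P(1) M PM] P(2) by simp
    moreover have "order G > 0" using finite_carrier order_gt_0_iff_finite by blast
    ultimately show ?thesis
      using coprime_multiplicity_power_div[OF q] P(2) unfolding a_def by simp
  qed
  have finM: "finite M" using finite_carrier subgroup.subset[OF M] finite_subset by blast
  (* P is a normal Hall subgroup of M = N(P), so whatever normalizes M normalizes P; thus M is
     its own normalizer, and normalizers grow. *)
  have "M = carrier G"
  proof (rule ccontr)
    assume "M \<noteq> carrier G"
    then obtain z where z: "z \<in> normalizer G M" "z \<notin> M" using normalizer_grows[OF M] by blast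
    have NM: "subgroup (normalizer G M) G" using normalizer_imp_subgroup subgroup.subset[OF M] by blast
    have conj: "w \<otimes> y \<otimes> inv w \<in> P" if "w \<in> normalizer G M" "y \<in> P" for w y
      using normal_hall_subgroup_conj_closed[OF M finM P_normal_M hall that] .
    have z_inv: "inv z \<in> normalizer G M" using subgroup.m_inv_closed[OF NM z(1)] .
    have zG: "z \<in> carrier G" using z(1) subgroup.subset[OF NM] by blast
    have "z \<in> normalizer G P"
    proof (rule normalizerI[OF PG zG])
      fix h assume h: "h \<in> P"
      show "z \<otimes> h \<otimes> inv z \<in> P" using conj[OF z(1) h] .
      show "inv z \<otimes> h \<otimes> z \<in> P" using conj[OF z_inv h] zG by simp
    qed
    then show False using z(2) unfolding M_def by blast
  qed
  then show ?thesis using that P(2) P_normal_M unfolding a_def by simp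
qed

lemma torsion_hall_divisor:
  assumes "d dvd order G" "coprime d (order G div d)"
  shows "subgroup (torsion G d) G \<and> card (torsion G d) = d"
  using assms
proof (induction d rule: less_induct)
  case (less d)
  show ?case
  proof (cases "d = 1")
    case True
    then have "torsion G d = {\<one>}" unfolding torsion_def by auto
    then show ?thesis using triv_subgroup True by simp
  next
    case False
    then obtain q where q: "Factorial_Ring.prime q" "q dvd d" using prime_factor_nat by blast
    have "order G > 0" using finite_carrier order_gt_0_iff_finite by blast
    then obtain d' where d': "d = d' * q ^ multiplicity q (order G)" "d' < d" "d' dvd order G"
      "coprime d' (order G div d')" "coprime d' q"
      using hall_divisor_remove_prime[OF q less.prems(1) _ less.prems(2)] by blast
    obtain P where P: "P \<lhd> G" "card P = q ^ multiplicity q (order G)"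
      using sylow_normal[OF q(1)] .
    define A where "A = torsion G d'"
    have A: "subgroup A G" "card A = d'" "A \<lhd> G"
      using less.IH[OF d'(2-4)] torsion_normal unfolding A_def by auto
    (* T = P A has order d, and it contains every x with x^d = 1 since its index is prime to d. *)
    define T where "T = P <#> A"
    have T: "T \<lhd> G" unfolding T_def using normal_set_mult[OF P(1) A(3)] .
    have fin: "finite P" "finite A"
      using finite_carrier P(1) A(1) normal_imp_subgroup subgroup.subset finite_subset by metis+
    have "card T = d"
      using card_set_mult_coprime[OF normal_imp_subgroup[OF P(1)] fin(1) A(1) fin(2)]
        normal_imp_subgroup[OF T] P(2) A(2) d'(1,5)
      unfolding T_def by (simp add: coprime_commute)
    moreover have "torsion G d = T"
    proof
      show "T \<subseteq> torsion G d"
        using pow_card_subgroup_eq_one[OF normal_imp_subgroup[OF T]] \<open>card T = d\<close>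
          subgroup.subset[OF normal_imp_subgroup[OF T]]
        unfolding torsion_def by auto
      show "torsion G d \<subseteq> T"
        using mem_normal_subgroup_if_pow_eq_one[OF finite_carrier T] less.prems(2) \<open>card T = d\<close>
        unfolding torsion_def by auto
    qed
    ultimately show ?thesis using normal_imp_subgroup[OF T] by simp
  qed
qed

lemma torsion_p_complement:
  assumes p: "Factorial_Ring.prime p"
  defines "d \<equiv> order G div p ^ multiplicity p (order G)"
  shows "subgroup (torsion G d) G" "coprime (card (torsion G d)) p"
    "order G = p ^ multiplicity p (order G) * card (torsion G d)"
proof -
  define a where "a = multiplicity p (order G)"
  have "order G > 0" using finite_carrier order_gt_0_iff_finite by blast
  have Gd: "order G = p ^ a * d" unfolding d_def a_def by (simp add: multiplicity_dvd)
  have "\<not> p dvd d"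
    using \<open>order G > 0\<close> prime_gt_1_nat[OF p] multiplicity_decompose[of "order G" p]
    unfolding d_def by auto
  then have dp: "coprime d p" using p prime_imp_coprime coprime_commute by blast
  have "order G div d = p ^ a" using Gd \<open>order G > 0\<close> by auto
  then have "subgroup (torsion G d) G \<and> card (torsion G d) = d"
    using torsion_hall_divisor[of d] Gd dp by simp
  then show "subgroup (torsion G d) G" "coprime (card (torsion G d)) p"
    "order G = p ^ a * card (torsion G d)" using Gd dp by auto
qed

end

context group
begin

lemma nilpotent_normal_subgroup_p_complement:
  assumes H: "subgroup H G" "finite H" and N: "N \<lhd> G\<lparr>carrier := H\<rparr>"
    and nil: "nilpotent_class_le G N c" and p: "Factorial_Ring.prime p"
  obtains K where "K \<subseteq> N" "K \<lhd> G\<lparr>carrier := H\<rparr>" "coprime (card K) p"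
    "card N \<le> sylow_order p (card H) * card K"
proof -
  have NG: "subgroup N G" and NH: "N \<subseteq> H"
    and conjN: "\<forall>g\<in>H. \<forall>x\<in>N. g \<otimes> x \<otimes> inv g \<in> N"
    using N normal_in_subgroup_iff[OF H(1)] by auto
  have "finite_nilpotent_group (G\<lparr>carrier := N\<rparr>) c"
    using subgroup_imp_group[OF NG] finite_subset[OF NH H(2)] nil lower_central_consistent[OF NG]
    by (simp add: finite_nilpotent_group_def finite_nilpotent_group_axioms_def
        nilpotent_group_def nilpotent_group_axioms_def nilpotent_class_le_def)
  then interpret N: finite_nilpotent_group "G\<lparr>carrier := N\<rparr>" c .
  define a where "a = multiplicity p (card N)"
  define d where "d = card N div p ^ a"
  define K where "K = torsion (G\<lparr>carrier := N\<rparr>) d"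
  have K: "subgroup K (G\<lparr>carrier := N\<rparr>)" "coprime (card K) p" "card N = p ^ a * card K"
    using N.torsion_p_complement[OF p] unfolding K_def d_def a_def by (simp_all add: order_def)
  have K_eq: "K = {x \<in> N. x [^] d = \<one>}"
    unfolding K_def torsion_def by (simp flip: nat_pow_consistent)
  have "K \<lhd> G\<lparr>carrier := H\<rparr>"
    unfolding normal_in_subgroup_iff[OF H(1)]
  proof (intro conjI ballI incl_subgroup[OF NG K(1)])
    show "K \<subseteq> H" using K_eq NH by auto
    fix g x assume g: "g \<in> H" and x: "x \<in> K"
    have "g \<in> carrier G" "x \<in> carrier G"
      using g x K_eq NH subgroup.subset[OF H(1)] by auto
    then show "g \<otimes> x \<otimes> inv g \<in> K"
      using conjN g x unfolding K_eq by (simp add: conj_nat_pow)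
  qed
  moreover have "p ^ a \<le> sylow_order p (card H)"
  proof -
    have "card N dvd card H" using card_subgroup_dvd_card[OF NG H(1) NH] .
    moreover have "card H \<noteq> 0" using H subgroup.one_closed card_gt_0_iff by blast
    ultimately have "a \<le> multiplicity p (card H)" unfolding a_def by (rule dvd_imp_multiplicity_le)
    then show ?thesis
      unfolding sylow_order_def using prime_gt_1_nat[OF p] by (simp add: power_increasing)
  qed
  then have "card N \<le> sylow_order p (card H) * card K" using K(3) by simp
  moreover have "K \<subseteq> N" using K_eq by auto
  ultimately show ?thesis using that K(2) by blast
qed

lemma p_jordan_bound_if_jordan_bound:
  assumes p: "Factorial_Ring.prime p"
    and hereditary: "\<And>N K. Q N \<Longrightarrow> subgroup K G \<Longrightarrow> K \<subseteq> N \<Longrightarrow> Q K"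
    and nilpotent: "\<And>N. subgroup N G \<Longrightarrow> Q N \<Longrightarrow> \<exists>c. nilpotent_class_le G N c"
    and jordan: "\<exists>J. \<forall>H. subgroup H G \<and> finite H \<longrightarrow>
      (\<exists>N. N \<lhd> G\<lparr>carrier := H\<rparr> \<and> Q N \<and> card H \<le> J * card N)"
  shows "\<exists>J e. \<forall>H. subgroup H G \<and> finite H \<longrightarrow>
      (\<exists>K. K \<lhd> G\<lparr>carrier := H\<rparr> \<and> coprime (card K) p \<and> Q K \<and>
        card H \<le> J * sylow_order p (card H) ^ e * card K)"
proof -
  obtain J where J: "\<forall>H. subgroup H G \<and> finite H \<longrightarrow>
      (\<exists>N. N \<lhd> G\<lparr>carrier := H\<rparr> \<and> Q N \<and> card H \<le> J * card N)"
    using jordan by blast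
  have "\<exists>K. K \<lhd> G\<lparr>carrier := H\<rparr> \<and> coprime (card K) p \<and> Q K \<and>
      card H \<le> J * sylow_order p (card H) ^ 1 * card K" if H: "subgroup H G" "finite H" for H
  proof -
    obtain N where N: "N \<lhd> G\<lparr>carrier := H\<rparr>" "Q N" "card H \<le> J * card N"
      using J H by blast
    have "subgroup N G" using N(1) normal_in_subgroup_iff H(1) by blast
    then obtain c where "nilpotent_class_le G N c" using nilpotent N(2) by blast
    then obtain K where K: "K \<subseteq> N" "K \<lhd> G\<lparr>carrier := H\<rparr>" "coprime (card K) p"
      "card N \<le> sylow_order p (card H) * card K"
      using nilpotent_normal_subgroup_p_complement[OF H N(1) _ p] by blast
    have "Q K" using hereditary[OF N(2) _ K(1)] K(2) normal_in_subgroup_iff H(1) by blast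
    moreover have "card H \<le> J * sylow_order p (card H) ^ 1 * card K"
      using N(3) K(4) by (metis mult.assoc mult_le_mono2 order_trans power_one_right)
    ultimately show ?thesis using K by blast
  qed
  then show ?thesis by blast
qed

end

theorem corollary2p6:
  fixes G :: "('a, 'b) monoid_scheme" and p c :: nat
  assumes "group G" and "Factorial_Ring.prime p"
  shows "(jordan G \<longrightarrow> p_jordan G p) \<and> (nil_jordan G c \<longrightarrow> nil_p_jordan G p c)"
proof -
  interpret group G by fact
  have "abelian_set G K" if "abelian_set G N" "K \<subseteq> N" for N K
    using that unfolding abelian_set_def by blast
  moreover have "\<exists>c. nilpotent_class_le G N c" if "subgroup N G" "abelian_set G N" for N
    using abelian_set_imp_nilpotent_class_le_1[OF subgroup.subset[OF that(1)] that(2)] by blast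
  ultimately have "jordan G \<longrightarrow> p_jordan G p"
    unfolding jordan_def p_jordan_def using p_jordan_bound_if_jordan_bound[OF assms(2)] by blast
  moreover have "nil_jordan G c \<longrightarrow> nil_p_jordan G p c"
    unfolding nil_jordan_def nil_p_jordan_def
    using p_jordan_bound_if_jordan_bound[OF assms(2), of "\<lambda>N. nilpotent_class_le G N c"]
      nilpotent_class_le_subgroup by blast
  ultimately show ?thesis ..
qed

end
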